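(* Let $\Gamma=(V,E,\psi)$ be a multigraph without loops. Then $\Gamma$ is a $G$-graph (i.e. $\Gamma\cong\Phi(G,S)$ for some group $G$ and multiset $S$ of elements of $G$) if and only if there exist a subgroup $H$ of $Aut(\Gamma)$ and a clique $C\subseteq V$ such that: (1) each orbit of the action of $H$ on $V$ is a stable set; (2) $C$ intersects every orbit of the action of $H$ on $V$; (3) for every $u\in C$, $Stab_H u$ is cyclic; (4) for every $u\in C$ and every orbit $O$ of $H$ with $u\notin O$, $Stab_H u$ acts regularly on the set of edges incident to $u$ whose other end-point lies in $O$.
   Context: A multigraph is a triple $(V,E,\psi)$ where $\psi$ assigns to each edge an unordered pair of vertices; parallel edges allowed. Automorphisms are pairs $(f,f^\#)$ of bijections of vertices and edges compatible with $\psi$, so $Aut(\Gamma)$ acts on $V$ and $E$. A clique is a set of pairwise adjacent vertices; a stable set is a set of pairwise non-adjacent vertices. An action is regular on $X$ if for all $x,y\in X$ exactly one group element sends $x$ to $y$. For a group $G$ and a multiset $S$ of elements of $G$, $\Phi(G,S)$ is the multigraph whose vertex set is the union over the members $s$ of $S$ (with multiplicity, a repeated element giving a separate copy of its cosets per occurrence) of $V_s=\{\langle s\rangle x: x\in G\}$ (right cosets), with, for $\langle s\rangle x\in V_s$, $\langle t\rangle y\in V_t$, $s,t$ distinct members of $S$, one edge labeled $g$ between them for each $g\in\langle s\rangle x\cap\langle t\rangle y$, and no other edges. A $G$-graph is a multigraph isomorphic (ignoring labels) to some $\Phi(G,S)$. *)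

theory Defs
  imports "HOL-Algebra.Coset" "HOL-Algebra.Generated_Groups" "HOL-Algebra.Elementary_Groups"
begin

definition loopless_multigraph :: "'v set \<Rightarrow> 'e set \<Rightarrow> ('e \<Rightarrow> 'v set) \<Rightarrow> bool" where
  "loopless_multigraph V E \<psi> \<longleftrightarrow>
     (\<forall>e\<in>E. \<exists>u w. u \<in> V \<and> w \<in> V \<and> u \<noteq> w \<and> \<psi> e = {u, w})"

definition mg_iso :: "'v set \<Rightarrow> 'e set \<Rightarrow> ('e \<Rightarrow> 'v set) \<Rightarrow>
                      'w set \<Rightarrow> 'f set \<Rightarrow> ('f \<Rightarrow> 'w set) \<Rightarrow> bool" where
  "mg_iso V E \<psi> V' E' \<psi>' \<longleftrightarrow>
     (\<exists>f g. bij_betw f V V' \<and> bij_betw g E E' \<and> (\<forall>e\<in>E. \<psi>' (g e) = f ` \<psi> e))"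

text \<open>Automorphisms: pairs (f, f#) of bijections of V and E compatible with psi.
  To obtain a canonical representation they are required to be the identity off V resp. E.\<close>
definition aut :: "'v set \<Rightarrow> 'e set \<Rightarrow> ('e \<Rightarrow> 'v set) \<Rightarrow> (('v \<Rightarrow> 'v) \<times> ('e \<Rightarrow> 'e)) set" where
  "aut V E \<psi> = {(f, g). bij_betw f V V \<and> bij_betw g E E \<and>
       (\<forall>x. x \<notin> V \<longrightarrow> f x = x) \<and> (\<forall>e. e \<notin> E \<longrightarrow> g e = e) \<and>
       (\<forall>e\<in>E. \<psi> (g e) = f ` \<psi> e)}"

definition AutGroup :: "'v set \<Rightarrow> 'e set \<Rightarrow> ('e \<Rightarrow> 'v set) \<Rightarrow> (('v \<Rightarrow> 'v) \<times> ('e \<Rightarrow> 'e)) monoid" where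
  "AutGroup V E \<psi> = \<lparr>carrier = aut V E \<psi>,
      mult = (\<lambda>a b. (fst a \<circ> fst b, snd a \<circ> snd b)), one = (id, id)\<rparr>"

definition vorbit :: "(('v \<Rightarrow> 'v) \<times> ('e \<Rightarrow> 'e)) set \<Rightarrow> 'v \<Rightarrow> 'v set" where
  "vorbit H v = (\<lambda>h. fst h v) ` H"

definition vorbits :: "(('v \<Rightarrow> 'v) \<times> ('e \<Rightarrow> 'e)) set \<Rightarrow> 'v set \<Rightarrow> 'v set set" where
  "vorbits H V = vorbit H ` V"

definition vstab :: "(('v \<Rightarrow> 'v) \<times> ('e \<Rightarrow> 'e)) set \<Rightarrow> 'v \<Rightarrow> (('v \<Rightarrow> 'v) \<times> ('e \<Rightarrow> 'e)) set" where
  "vstab H u = {h \<in> H. fst h u = u}"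

definition adjacent :: "'e set \<Rightarrow> ('e \<Rightarrow> 'v set) \<Rightarrow> 'v \<Rightarrow> 'v \<Rightarrow> bool" where
  "adjacent E \<psi> u v \<longleftrightarrow> (\<exists>e\<in>E. \<psi> e = {u, v})"

definition clique :: "'v set \<Rightarrow> 'e set \<Rightarrow> ('e \<Rightarrow> 'v set) \<Rightarrow> 'v set \<Rightarrow> bool" where
  "clique V E \<psi> C \<longleftrightarrow> C \<subseteq> V \<and> (\<forall>u\<in>C. \<forall>v\<in>C. u \<noteq> v \<longrightarrow> adjacent E \<psi> u v)"

definition stable_set :: "'v set \<Rightarrow> 'e set \<Rightarrow> ('e \<Rightarrow> 'v set) \<Rightarrow> 'v set \<Rightarrow> bool" where
  "stable_set V E \<psi> S \<longleftrightarrow> S \<subseteq> V \<and> (\<forall>u\<in>S. \<forall>v\<in>S. u \<noteq> v \<longrightarrow> \<not> adjacent E \<psi> u v)"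

definition edges_to :: "'e set \<Rightarrow> ('e \<Rightarrow> 'v set) \<Rightarrow> 'v \<Rightarrow> 'v set \<Rightarrow> 'e set" where
  "edges_to E \<psi> u Orb = {e \<in> E. \<exists>w\<in>Orb. \<psi> e = {u, w}}"

definition regular_action :: "'g set \<Rightarrow> ('g \<Rightarrow> 'x \<Rightarrow> 'x) \<Rightarrow> 'x set \<Rightarrow> bool" where
  "regular_action K act X \<longleftrightarrow> (\<forall>x\<in>X. \<forall>y\<in>X. \<exists>!k. k \<in> K \<and> act k x = y)"

text \<open>The multiset S is represented as a family s indexed by I
  (each index is one occurrence of an element). A vertex is a pair (i, <s i> x) (copy i of
  the right coset); an edge is the pair (set of its two end-points, label g).\<close>
definition PhiV :: "('g, 'b) monoid_scheme \<Rightarrow> 'i set \<Rightarrow> ('i \<Rightarrow> 'g) \<Rightarrow> ('i \<times> 'g set) set" where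
  "PhiV G I s = {(i, generate G {s i} #>\<^bsub>G\<^esub> x) | i x. i \<in> I \<and> x \<in> carrier G}"

definition PhiE :: "('g, 'b) monoid_scheme \<Rightarrow> 'i set \<Rightarrow> ('i \<Rightarrow> 'g)
                    \<Rightarrow> (('i \<times> 'g set) set \<times> 'g) set" where
  "PhiE G I s = {({(i, A), (j, B)}, g) | i j A B g.
       i \<in> I \<and> j \<in> I \<and> i \<noteq> j \<and> (i, A) \<in> PhiV G I s \<and> (j, B) \<in> PhiV G I s \<and> g \<in> A \<inter> B}"

definition PhiPsi :: "(('i \<times> 'g set) set \<times> 'g) \<Rightarrow> ('i \<times> 'g set) set" where
  "PhiPsi = fst"

definition G_graph_via :: "('g, 'b) monoid_scheme \<Rightarrow> 'i set \<Rightarrow> ('i \<Rightarrow> 'g)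
                            \<Rightarrow> 'v set \<Rightarrow> 'e set \<Rightarrow> ('e \<Rightarrow> 'v set) \<Rightarrow> bool" where
  "G_graph_via G I s V E \<psi> \<longleftrightarrow> group G \<and> s ` I \<subseteq> carrier G \<and>
      mg_iso (PhiV G I s) (PhiE G I s) PhiPsi V E \<psi>"

definition char_conditions :: "'v set \<Rightarrow> 'e set \<Rightarrow> ('e \<Rightarrow> 'v set)
     \<Rightarrow> (('v \<Rightarrow> 'v) \<times> ('e \<Rightarrow> 'e)) set \<Rightarrow> 'v set \<Rightarrow> bool" where
  "char_conditions V E \<psi> H C \<longleftrightarrow>
     subgroup H (AutGroup V E \<psi>) \<and> clique V E \<psi> C \<and>
     (\<forall>Orb\<in>vorbits H V. stable_set V E \<psi> Orb) \<and>
     (\<forall>Orb\<in>vorbits H V. C \<inter> Orb \<noteq> {}) \<and>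
     (\<forall>u\<in>C. cyclic_group (subgroup_generated (AutGroup V E \<psi>) (vstab H u))) \<and>
     (\<forall>u\<in>C. \<forall>Orb\<in>vorbits H V. u \<notin> Orb \<longrightarrow>
        regular_action (vstab H u) (\<lambda>h e. snd h e) (edges_to E \<psi> u Orb))"

end

theory Submission
  imports Defs
begin

text \<open>
  If \<open>\<Gamma> \<cong> \<Phi>(G, S)\<close>, let \<open>G\<close> act on \<open>\<Phi>(G, S)\<close> by right multiplication and transport this action
  to \<open>\<Gamma>\<close>. Its orbits are the copies \<open>V\<^sub>s\<close>, which carry no internal edges; the cosets
  \<open>\<langle>s\<rangle>\<close> themselves are pairwise joined by the edges labelled \<open>1\<close>, so they form a clique meeting
  every orbit; the stabiliser of \<open>\<langle>s\<rangle>\<close> is \<open>\<langle>s\<rangle>\<close>, and the edges from \<open>\<langle>s\<rangle>\<close> to \<open>V\<^sub>t\<close> are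
  labelled by the elements of \<open>\<langle>s\<rangle>\<close>, on which \<open>\<langle>s\<rangle>\<close> acts regularly.

  Conversely, given \<open>H\<close> and \<open>C\<close>, stability of the orbits and the clique property force \<open>C\<close> to
  meet every orbit exactly once. Choosing a generator \<open>g\<^sub>c\<close> of each cyclic stabiliser,
  the orbit--stabiliser correspondence identifies the vertices of \<open>\<Gamma>\<close> with those of
  \<open>\<Phi>(H, {g\<^sub>c | c \<in> C})\<close>, and the regular action of the stabilisers on edges between orbits
  identifies the edges.
\<close>

lemma aut_comp_closed:
  assumes "a \<in> aut V E \<psi>" "b \<in> aut V E \<psi>"
  shows "(fst a \<circ> fst b, snd a \<circ> snd b) \<in> aut V E \<psi>"
proof -
  have "\<psi> (snd a (snd b e)) = fst a ` fst b ` \<psi> e" if "e \<in> E" for e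
    using assms that by (auto simp: aut_def bij_betw_apply)
  then show ?thesis
    using assms by (auto simp: aut_def bij_betw_trans image_comp)
qed

lemma aut_id: "(id, id) \<in> aut V E \<psi>"
  by (simp add: aut_def)

lemma group_AutGroup: "group (AutGroup V E \<psi>)"
proof (rule groupI)
  fix x assume "x \<in> carrier (AutGroup V E \<psi>)"
  then obtain f g where x: "x = (f, g)" and fg: "(f, g) \<in> aut V E \<psi>"
    by (cases x) (simp add: AutGroup_def)
  have bf: "bij_betw f V V" and bg: "bij_betw g E E" and fo: "\<forall>v. v \<notin> V \<longrightarrow> f v = v"
    and go: "\<forall>e. e \<notin> E \<longrightarrow> g e = e" and fg_psi: "\<forall>e\<in>E. \<psi> (g e) = f ` \<psi> e"
    using fg by (auto simp: aut_def)
  define f' where "f' v = (if v \<in> V then inv_into V f v else v)" for v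
  define g' where "g' e = (if e \<in> E then inv_into E g e else e)" for e
  have f'_f: "f' (f v) = v" for v
    using bf fo by (cases "v \<in> V") (auto simp: f'_def bij_betw_def bij_betw_apply[OF bf])
  have g'_g: "g' (g e) = e" for e
    using bg go by (cases "e \<in> E") (auto simp: g'_def bij_betw_def bij_betw_apply[OF bg])
  have "(f', g') \<in> aut V E \<psi>"
  proof -
    have "bij_betw f' V V" "bij_betw g' E E"
      using bij_betw_inv_into[OF bf] bij_betw_inv_into[OF bg]
      by (auto simp: f'_def g'_def cong: bij_betw_cong)
    moreover have "\<psi> (g' e) = f' ` \<psi> e" if "e \<in> E" for e
    proof -
      have "g (g' e) = e" "g' e \<in> E"
        using that bg by (simp_all add: g'_def bij_betw_def f_inv_into_f inv_into_into)
      then have "\<psi> e = f ` \<psi> (g' e)" using fg_psi by metis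
      then show ?thesis by (simp add: image_comp f'_f comp_def)
    qed
    ultimately show ?thesis by (auto simp: aut_def f'_def g'_def)
  qed
  moreover have "(fst (f', g') \<circ> f, snd (f', g') \<circ> g) = (id, id)"
    by (simp add: fun_eq_iff f'_f g'_g)
  ultimately show "\<exists>y\<in>carrier (AutGroup V E \<psi>). y \<otimes>\<^bsub>AutGroup V E \<psi>\<^esub> x = \<one>\<^bsub>AutGroup V E \<psi>\<^esub>"
    unfolding x AutGroup_def by (intro bexI[of _ "(f', g')"]) simp_all
qed (simp_all add: AutGroup_def aut_comp_closed aut_id o_assoc)

lemma carrier_AutGroup: "carrier (AutGroup V E \<psi>) = aut V E \<psi>"
  by (simp add: AutGroup_def)

lemma AutGroup_apply [simp]:
  "fst (a \<otimes>\<^bsub>AutGroup V E \<psi>\<^esub> b) v = fst a (fst b v)"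
  "snd (a \<otimes>\<^bsub>AutGroup V E \<psi>\<^esub> b) e = snd a (snd b e)"
  "fst \<one>\<^bsub>AutGroup V E \<psi>\<^esub> v = v"
  "snd \<one>\<^bsub>AutGroup V E \<psi>\<^esub> e = e"
  by (simp_all add: AutGroup_def)

lemma AutGroup_inv_cancel:
  assumes "a \<in> aut V E \<psi>"
  shows "fst (inv\<^bsub>AutGroup V E \<psi>\<^esub> a) (fst a v) = v" "fst a (fst (inv\<^bsub>AutGroup V E \<psi>\<^esub> a) v) = v"
    "snd (inv\<^bsub>AutGroup V E \<psi>\<^esub> a) (snd a e) = e" "snd a (snd (inv\<^bsub>AutGroup V E \<psi>\<^esub> a) e) = e"
proof -
  interpret group "AutGroup V E \<psi>" by (rule group_AutGroup)
  have "inv\<^bsub>AutGroup V E \<psi>\<^esub> a \<otimes>\<^bsub>AutGroup V E \<psi>\<^esub> a = \<one>\<^bsub>AutGroup V E \<psi>\<^esub>"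
    "a \<otimes>\<^bsub>AutGroup V E \<psi>\<^esub> inv\<^bsub>AutGroup V E \<psi>\<^esub> a = \<one>\<^bsub>AutGroup V E \<psi>\<^esub>"
    using assms by (simp_all add: carrier_AutGroup)
  then show "fst (inv\<^bsub>AutGroup V E \<psi>\<^esub> a) (fst a v) = v" "fst a (fst (inv\<^bsub>AutGroup V E \<psi>\<^esub> a) v) = v"
    "snd (inv\<^bsub>AutGroup V E \<psi>\<^esub> a) (snd a e) = e" "snd a (snd (inv\<^bsub>AutGroup V E \<psi>\<^esub> a) e) = e"
    by (metis AutGroup_apply)+
qed

lemma cyclic_subgroup_generated_iff:
  assumes "group A" "subgroup K A"
  shows "cyclic_group (subgroup_generated A K) \<longleftrightarrow> (\<exists>x\<in>K. K = generate A {x})"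
proof -
  interpret group A by fact
  have K: "subgroup_generated A K = A\<lparr>carrier := K\<rparr>"
    using assms(2) subgroup.carrier_subgroup_generated_subgroup
    by (metis carrier_subgroup_generated subgroup_generated_def)
  have gen: "generate (A\<lparr>carrier := K\<rparr>) {x} = generate A {x}" if "x \<in> K" for x
    using generate_consistent[OF _ assms(2)] that by simp
  show ?thesis
  proof
    assume "cyclic_group (subgroup_generated A K)"
    then obtain x where x: "x \<in> K"
      and eq: "subgroup_generated (A\<lparr>carrier := K\<rparr>) {x} = A\<lparr>carrier := K\<rparr>"
      unfolding cyclic_group_def K by auto
    have "K = carrier (subgroup_generated (A\<lparr>carrier := K\<rparr>) {x})"
      by (subst eq) simp
    also have "\<dots> = generate A {x}"
      using x gen by (simp add: carrier_subgroup_generated)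
    finally show "\<exists>x\<in>K. K = generate A {x}" using x by blast
  next
    assume "\<exists>x\<in>K. K = generate A {x}"
    then obtain x where "x \<in> K" "K = generate A {x}" by blast
    then have "subgroup_generated A K = subgroup_generated A {x}"
      using K subgroup.mem_carrier[OF assms(2)] by (simp add: subgroup_generated_def Int_absorb1)
    then show "cyclic_group (subgroup_generated A K)" by (simp add: cyclic_group_generated)
  qed
qed

section \<open>Transporting permutations along a bijection\<close>

text \<open>The permutation of \<open>Q\<close> corresponding to \<open>f\<close> under \<open>\<phi>\<close>, extended by the identity outside
  \<open>Q\<close> as automorphisms are required to be.\<close>

definition transport :: "('a \<Rightarrow> 'b) \<Rightarrow> 'a set \<Rightarrow> 'b set \<Rightarrow> ('a \<Rightarrow> 'a) \<Rightarrow> 'b \<Rightarrow> 'b" where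
  "transport \<phi> P Q f y = (if y \<in> Q then \<phi> (f (inv_into P \<phi> y)) else y)"

lemma transport_outside: "y \<notin> Q \<Longrightarrow> transport \<phi> P Q f y = y"
  by (simp add: transport_def)

context
  fixes \<phi> :: "'a \<Rightarrow> 'b" and P :: "'a set" and Q :: "'b set"
  assumes bij: "bij_betw \<phi> P Q"
begin

lemma transport_apply: "p \<in> P \<Longrightarrow> transport \<phi> P Q f (\<phi> p) = \<phi> (f p)"
  using bij by (simp add: transport_def bij_betw_apply bij_betw_inv_into_left)

lemma transport_cases:
  obtains "y \<notin> Q" | p where "p \<in> P" "y = \<phi> p"
  using bij by (metis bij_betw_inv_into_right bij_betw_apply bij_betw_inv_into)

lemma transport_compose:
  assumes "\<And>p. p \<in> P \<Longrightarrow> g p \<in> P" "\<And>p. p \<in> P \<Longrightarrow> h p = f (g p)"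
  shows "transport \<phi> P Q h y = transport \<phi> P Q f (transport \<phi> P Q g y)"
  by (cases y rule: transport_cases) (simp_all add: transport_apply transport_outside assms)

lemma transport_image: "X \<subseteq> P \<Longrightarrow> transport \<phi> P Q f ` \<phi> ` X = \<phi> ` f ` X"
  by (force simp: transport_apply image_image subset_iff intro: image_cong)

lemma bij_betw_transport:
  assumes "bij_betw f P P"
  shows "bij_betw (transport \<phi> P Q f) Q Q"
proof -
  have "bij_betw (\<phi> \<circ> f \<circ> inv_into P \<phi>) Q Q"
    using bij assms bij_betw_inv_into by (blast intro: bij_betw_trans)
  then show ?thesis
    by (rule bij_betw_cong[THEN iffD1, rotated]) (simp add: transport_def)
qed

end

locale aut_subgroup =
  fixes V :: "'v set" and E :: "'e set" and \<psi> :: "'e \<Rightarrow> 'v set"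
    and H :: "(('v \<Rightarrow> 'v) \<times> ('e \<Rightarrow> 'e)) set"
  assumes subgroup_H: "subgroup H (AutGroup V E \<psi>)"
begin

abbreviation "A \<equiv> AutGroup V E \<psi>"

sublocale A: group A by (rule group_AutGroup)

lemmas H_inv_closed = subgroup.m_inv_closed[OF subgroup_H]
lemmas H_mult_closed = subgroup.m_closed[OF subgroup_H]

lemmas H_one = subgroup.one_closed[OF subgroup_H]
lemmas H_carrier = subgroup.mem_carrier[OF subgroup_H]

lemma H_aut: "h \<in> H \<Longrightarrow> h \<in> aut V E \<psi>"
  using H_carrier by (simp add: carrier_AutGroup)

lemma act_vertex: "h \<in> H \<Longrightarrow> v \<in> V \<Longrightarrow> fst h v \<in> V"
  using H_aut[of h] by (auto simp: aut_def bij_betw_apply)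

lemma act_edge: "h \<in> H \<Longrightarrow> e \<in> E \<Longrightarrow> snd h e \<in> E"
  using H_aut[of h] by (auto simp: aut_def bij_betw_apply)

lemma act_ends: "h \<in> H \<Longrightarrow> e \<in> E \<Longrightarrow> \<psi> (snd h e) = fst h ` \<psi> e"
  using H_aut[of h] by (auto simp: aut_def)

lemmas inv_cancel = AutGroup_inv_cancel[OF H_aut]

lemma vorbit_memI: "h \<in> H \<Longrightarrow> fst h v \<in> vorbit H v"
  unfolding vorbit_def by blast

lemma vorbit_self: "v \<in> vorbit H v"
  using vorbit_memI[OF H_one, of v] by simp

lemma vorbit_eq:
  assumes "w \<in> vorbit H v"
  shows "vorbit H w = vorbit H v"
proof -
  obtain h where h: "h \<in> H" "w = fst h v" using assms unfolding vorbit_def by blast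
  have "fst k w = fst (k \<otimes>\<^bsub>A\<^esub> h) v" "fst k v = fst (k \<otimes>\<^bsub>A\<^esub> inv\<^bsub>A\<^esub> h) w" for k
    using h inv_cancel(1)[of h v] by simp_all
  then show ?thesis
    unfolding vorbit_def using h H_mult_closed H_inv_closed by blast
qed

lemma vorbit_in_vorbits: "v \<in> V \<Longrightarrow> vorbit H v \<in> vorbits H V"
  unfolding vorbits_def by blast

lemma vstab_subset: "vstab H c \<subseteq> H"
  unfolding vstab_def by blast

lemma one_vstab: "\<one>\<^bsub>A\<^esub> \<in> vstab H c"
  by (simp add: vstab_def H_one)

lemma subgroup_vstab: "subgroup (vstab H c) A"
proof (rule A.subgroupI)
  show "vstab H c \<subseteq> carrier A" using H_carrier vstab_subset by blast
  show "vstab H c \<noteq> {}" using one_vstab by blast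
  fix a b assume a: "a \<in> vstab H c" and b: "b \<in> vstab H c"
  then show "a \<otimes>\<^bsub>A\<^esub> b \<in> vstab H c"
    unfolding vstab_def using H_mult_closed by simp
  from a have "a \<in> H" "fst a c = c" unfolding vstab_def by auto
  then show "inv\<^bsub>A\<^esub> a \<in> vstab H c"
    unfolding vstab_def using H_inv_closed inv_cancel(1)[of a c] by simp
qed

lemma vstab_rcos_eq_iff:
  assumes "x \<in> H" "y \<in> H"
  shows "vstab H c #>\<^bsub>A\<^esub> x = vstab H c #>\<^bsub>A\<^esub> y \<longleftrightarrow> fst (inv\<^bsub>A\<^esub> x) c = fst (inv\<^bsub>A\<^esub> y) c"
proof -
  have x: "x \<in> carrier A" and y: "y \<in> carrier A" using assms H_carrier by auto
  have xy: "x \<otimes>\<^bsub>A\<^esub> inv\<^bsub>A\<^esub> y \<in> carrier A" by (rule A.m_closed[OF x A.inv_closed[OF y]])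
  note stab = subgroup_vstab[of c] subgroup.subset[OF subgroup_vstab[of c]]
  have "vstab H c #>\<^bsub>A\<^esub> x = vstab H c #>\<^bsub>A\<^esub> y \<longleftrightarrow> x \<otimes>\<^bsub>A\<^esub> inv\<^bsub>A\<^esub> y \<in> vstab H c"
  proof
    assume "vstab H c #>\<^bsub>A\<^esub> x = vstab H c #>\<^bsub>A\<^esub> y"
    from A.coset_mult_inv2[OF this x y stab(2)]
    show "x \<otimes>\<^bsub>A\<^esub> inv\<^bsub>A\<^esub> y \<in> vstab H c" by (rule A.coset_join1[OF _ xy stab(1)])
  next
    assume "x \<otimes>\<^bsub>A\<^esub> inv\<^bsub>A\<^esub> y \<in> vstab H c"
    from A.coset_join2[OF xy stab(1) this]
    show "vstab H c #>\<^bsub>A\<^esub> x = vstab H c #>\<^bsub>A\<^esub> y" by (rule A.coset_mult_inv1[OF _ x y stab(2)])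
  qed
  also have "\<dots> \<longleftrightarrow> fst x (fst (inv\<^bsub>A\<^esub> y) c) = c"
    using H_mult_closed[OF assms(1) H_inv_closed[OF assms(2)]] unfolding vstab_def by simp
  also have "\<dots> \<longleftrightarrow> fst (inv\<^bsub>A\<^esub> x) c = fst (inv\<^bsub>A\<^esub> y) c"
    using inv_cancel(1,2)[OF assms(1)] by metis
  finally show ?thesis .
qed

end

section \<open>\<open>G\<close> acting on a \<open>G\<close>-graph\<close>

text \<open>Right multiplication by \<open>x\<inverse>\<close> (rather than by \<open>x\<close>) makes \<open>x \<mapsto> rtransV G x\<close> a left action.\<close>

definition rtransV :: "('g, 'b) monoid_scheme \<Rightarrow> 'g \<Rightarrow> 'i \<times> 'g set \<Rightarrow> 'i \<times> 'g set" where
  "rtransV G x p = (fst p, snd p #>\<^bsub>G\<^esub> inv\<^bsub>G\<^esub> x)"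

definition rtransE :: "('g, 'b) monoid_scheme \<Rightarrow> 'g \<Rightarrow> ('i \<times> 'g set) set \<times> 'g \<Rightarrow> ('i \<times> 'g set) set \<times> 'g" where
  "rtransE G x e = (rtransV G x ` fst e, snd e \<otimes>\<^bsub>G\<^esub> inv\<^bsub>G\<^esub> x)"

locale Phi_graph = group G for G (structure) +
  fixes I :: "'i set" and s :: "'i \<Rightarrow> 'a"
  assumes gens: "s ` I \<subseteq> carrier G"
begin

abbreviation "PV \<equiv> PhiV G I s"
abbreviation "PE \<equiv> PhiE G I s"
abbreviation "K i \<equiv> generate G {s i}"

abbreviation base_edge :: "'i \<Rightarrow> 'i \<Rightarrow> 'a \<Rightarrow> ('i \<times> 'a set) set \<times> 'a" where
  "base_edge i j g \<equiv> ({(i, K i), (j, K j #>\<^bsub>G\<^esub> g)}, g)"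

lemma subgroup_K: "i \<in> I \<Longrightarrow> subgroup (K i) G"
  using gens by (intro generate_is_subgroup) auto

lemma K_carrier: "i \<in> I \<Longrightarrow> K i \<subseteq> carrier G"
  using subgroup.subset[OF subgroup_K] .

lemma PhiV_iff: "p \<in> PV \<longleftrightarrow> (\<exists>i x. p = (i, K i #> x) \<and> i \<in> I \<and> x \<in> carrier G)"
  unfolding PhiV_def by blast

lemma PhiV_memI: "i \<in> I \<Longrightarrow> x \<in> carrier G \<Longrightarrow> (i, K i #> x) \<in> PV"
  unfolding PhiV_iff by blast

lemma base_vertex_PhiV: "i \<in> I \<Longrightarrow> (i, K i) \<in> PV"
  using PhiV_memI[of i \<one>] coset_mult_one[OF K_carrier] by simp

lemma PhiV_carrier: "(i, S) \<in> PV \<Longrightarrow> S \<subseteq> carrier G"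
  unfolding PhiV_iff using r_coset_subset_G K_carrier by blast

lemma PhiE_iff: "e \<in> PE \<longleftrightarrow> (\<exists>i j S T g. e = ({(i, S), (j, T)}, g) \<and> i \<in> I \<and> j \<in> I \<and> i \<noteq> j \<and>
     (i, S) \<in> PV \<and> (j, T) \<in> PV \<and> g \<in> S \<and> g \<in> T)"
  unfolding PhiE_def by blast

lemma PhiE_memI:
  "i \<in> I \<Longrightarrow> j \<in> I \<Longrightarrow> i \<noteq> j \<Longrightarrow> (i, S) \<in> PV \<Longrightarrow> (j, T) \<in> PV \<Longrightarrow> g \<in> S \<Longrightarrow> g \<in> T \<Longrightarrow>
    ({(i, S), (j, T)}, g) \<in> PE"
  unfolding PhiE_iff by (intro exI[of _ i] exI[of _ j] exI[of _ S] exI[of _ T] exI[of _ g]) simp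

lemma PhiE_ends: "e \<in> PE \<Longrightarrow> fst e \<subseteq> PV"
  unfolding PhiE_iff by auto

lemma PhiE_label: "e \<in> PE \<Longrightarrow> snd e \<in> carrier G"
  unfolding PhiE_iff using PhiV_carrier by fastforce

lemma base_edge_PhiE:
  assumes "i \<in> I" "j \<in> I" "i \<noteq> j" "g \<in> K i"
  shows "base_edge i j g \<in> PE"
proof -
  have g: "g \<in> carrier G" using K_carrier assms by blast
  show ?thesis
    using PhiE_memI[OF assms(1-3) base_vertex_PhiV[OF assms(1)] PhiV_memI[OF assms(2) g] assms(4)
        rcos_self[OF g subgroup_K[OF assms(2)]]] .
qed

lemma rtransV_PhiV:
  assumes "p \<in> PV" "x \<in> carrier G"
  shows "rtransV G x p \<in> PV"
proof -
  obtain i y where p: "p = (i, K i #> y)" "i \<in> I" "y \<in> carrier G" using assms PhiV_iff by blast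
  then have "rtransV G x p = (i, K i #> (y \<otimes> inv x))"
    unfolding rtransV_def using coset_mult_assoc[OF K_carrier] assms(2) by simp
  then show ?thesis using PhiV_memI p assms by simp
qed

lemma rtransV_mult:
  assumes "p \<in> PV" "x \<in> carrier G" "y \<in> carrier G"
  shows "rtransV G x (rtransV G y p) = rtransV G (x \<otimes> y) p"
  using assms PhiV_carrier[of "fst p" "snd p"]
  by (simp add: rtransV_def coset_mult_assoc inv_mult_group)

lemma rtransV_one: "p \<in> PV \<Longrightarrow> rtransV G \<one> p = p"
  using PhiV_carrier[of "fst p" "snd p"] by (simp add: rtransV_def)

lemma rtransV_moves_copy:
  assumes "i \<in> I" "y \<in> carrier G" "z \<in> carrier G"
  shows "rtransV G (inv z \<otimes> y) (i, K i #> y) = (i, K i #> z)"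
proof -
  have "y \<otimes> inv (inv z \<otimes> y) = z"
    using assms(2,3) by (simp add: inv_mult_group flip: m_assoc)
  then show ?thesis
    using assms by (simp add: rtransV_def coset_mult_assoc K_carrier)
qed

lemma rtransV_base_vertex_iff:
  assumes "i \<in> I" "x \<in> carrier G"
  shows "rtransV G x (i, K i) = (i, K i) \<longleftrightarrow> x \<in> K i"
proof -
  have "rtransV G x (i, K i) = (i, K i) \<longleftrightarrow> K i #> inv x = K i" by (simp add: rtransV_def)
  also have "\<dots> \<longleftrightarrow> inv x \<in> K i"
    using coset_join1[OF _ _ subgroup_K[OF assms(1)]] coset_join2[OF _ subgroup_K[OF assms(1)]] assms(2)
    by blast
  also have "\<dots> \<longleftrightarrow> x \<in> K i"
    using subgroup.m_inv_closed[OF subgroup_K[OF assms(1)], of "inv x"]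
      subgroup.m_inv_closed[OF subgroup_K[OF assms(1)], of x] inv_inv[OF assms(2)] by auto
  finally show ?thesis .
qed

lemma rtransE_PhiE:
  assumes "e \<in> PE" "x \<in> carrier G"
  shows "rtransE G x e \<in> PE"
proof -
  obtain i j S T g where e: "e = ({(i, S), (j, T)}, g)" "i \<in> I" "j \<in> I" "i \<noteq> j"
     "(i, S) \<in> PV" "(j, T) \<in> PV" "g \<in> S" "g \<in> T" using assms(1) PhiE_iff by blast
  have "rtransE G x e = ({(i, S #> inv x), (j, T #> inv x)}, g \<otimes> inv x)"
    unfolding rtransE_def rtransV_def e by simp
  moreover have "(i, S #> inv x) \<in> PV" "(j, T #> inv x) \<in> PV"
    using rtransV_PhiV[OF e(5) assms(2)] rtransV_PhiV[OF e(6) assms(2)] by (simp_all add: rtransV_def)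
  moreover have "g \<otimes> inv x \<in> S #> inv x" "g \<otimes> inv x \<in> T #> inv x"
    unfolding r_coset_def using e by blast+
  ultimately show ?thesis using PhiE_memI[OF e(2-4)] by simp
qed

lemma rtransE_mult:
  assumes "e \<in> PE" "x \<in> carrier G" "y \<in> carrier G"
  shows "rtransE G x (rtransE G y e) = rtransE G (x \<otimes> y) e"
proof -
  have "rtransV G x ` rtransV G y ` fst e = rtransV G (x \<otimes> y) ` fst e"
    using rtransV_mult[OF _ assms(2,3)] PhiE_ends[OF assms(1)] by (force simp: image_image)
  then show ?thesis
    using assms PhiE_label[OF assms(1)] by (simp add: rtransE_def m_assoc inv_mult_group)
qed

lemma rtransE_one:
  assumes "e \<in> PE"
  shows "rtransE G \<one> e = e"
proof -
  have "rtransV G \<one> ` fst e = id ` fst e"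
    using rtransV_one PhiE_ends[OF assms] by (intro image_cong) auto
  then show ?thesis using PhiE_label[OF assms] by (simp add: rtransE_def)
qed

lemma bij_betw_rtransV:
  assumes "x \<in> carrier G"
  shows "bij_betw (rtransV G x) PV PV"
proof (rule bij_betw_byWitness[where f' = "rtransV G (inv x)"])
  show "\<forall>p\<in>PV. rtransV G (inv x) (rtransV G x p) = p"
    using rtransV_mult[OF _ inv_closed[OF assms] assms] rtransV_one assms by simp
  show "\<forall>p\<in>PV. rtransV G x (rtransV G (inv x) p) = p"
    using rtransV_mult[OF _ assms inv_closed[OF assms]] rtransV_one assms by simp
  show "rtransV G x ` PV \<subseteq> PV" "rtransV G (inv x) ` PV \<subseteq> PV"
    using rtransV_PhiV assms by auto
qed

lemma bij_betw_rtransE: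
  assumes "x \<in> carrier G"
  shows "bij_betw (rtransE G x) PE PE"
proof (rule bij_betw_byWitness[where f' = "rtransE G (inv x)"])
  show "\<forall>e\<in>PE. rtransE G (inv x) (rtransE G x e) = e"
    using rtransE_mult[OF _ inv_closed[OF assms] assms] rtransE_one assms by simp
  show "\<forall>e\<in>PE. rtransE G x (rtransE G (inv x) e) = e"
    using rtransE_mult[OF _ assms inv_closed[OF assms]] rtransE_one assms by simp
  show "rtransE G x ` PE \<subseteq> PE" "rtransE G (inv x) ` PE \<subseteq> PE"
    using rtransE_PhiE assms by auto
qed

lemma rtransE_base_edge:
  assumes "i \<in> I" "j \<in> I" "g \<in> K i" "x \<in> K i"
  shows "rtransE G x (base_edge i j g) = base_edge i j (g \<otimes> inv x)"
proof -
  have x: "x \<in> carrier G" and g: "g \<in> carrier G" using assms K_carrier by blast+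
  have "K i #> inv x = K i"
    using coset_join2[OF inv_closed[OF x] subgroup_K[OF assms(1)]
        subgroup.m_inv_closed[OF subgroup_K[OF assms(1)] assms(4)]] .
  moreover have "K j #> g #> inv x = K j #> (g \<otimes> inv x)"
    using coset_mult_assoc[OF K_carrier[OF assms(2)] g inv_closed[OF x]] .
  ultimately show ?thesis
    by (simp only: rtransE_def rtransV_def image_insert image_empty fst_conv snd_conv)
qed

lemma PhiE_ends_distinct:
  assumes "e \<in> PE" "fst e = {p, q}"
  shows "fst p \<noteq> fst q"
proof -
  obtain i j S T g where "e = ({(i, S), (j, T)}, g)" "i \<noteq> j" using assms(1) PhiE_iff by blast
  with assms(2) show ?thesis by (auto simp: doubleton_eq_iff)
qed

lemma PhiE_at_base_vertex:
  assumes "e \<in> PE" "fst e = {(i, K i), q}" "fst q = j" "j \<in> I"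
  shows "\<exists>g\<in>K i. e = base_edge i j g"
proof -
  obtain i1 j1 S T g where e: "e = ({(i1, S), (j1, T)}, g)" "(i1, S) \<in> PV" "(j1, T) \<in> PV"
    "g \<in> S" "g \<in> T"
    using assms(1) PhiE_iff by blast
  obtain z where z: "q = (j, K j #> z)" "z \<in> carrier G"
    using PhiE_ends[OF assms(1)] assms(2,3) PhiV_iff by auto
  have ends: "{(i1, S), (j1, T)} = {(i, K i), q}" using assms(2) e(1) by simp
  then have "g \<in> K i \<and> g \<in> K j #> z" using e(4,5) z(1) by (auto simp: doubleton_eq_iff)
  moreover have "K j #> z = K j #> g"
    if "g \<in> K j #> z" using repr_independence[OF that z(2) subgroup_K[OF assms(4)]] .
  ultimately show ?thesis using ends e(1) z(1) by auto
qed

end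

locale G_graph_iso = Phi_graph +
  fixes V :: "'v set" and E :: "'e set" and \<psi> :: "'e \<Rightarrow> 'v set"
    and \<phi> and \<gamma>
  assumes bij_vertex: "bij_betw \<phi> (PhiV G I s) V" and bij_edge: "bij_betw \<gamma> (PhiE G I s) E"
    and ends: "\<forall>e\<in>PhiE G I s. \<psi> (\<gamma> e) = \<phi> ` fst e"
begin

abbreviation "A \<equiv> AutGroup V E \<psi>"

definition translation :: "'a \<Rightarrow> ('v \<Rightarrow> 'v) \<times> ('e \<Rightarrow> 'e)" where
  "translation x = (transport \<phi> PV V (rtransV G x), transport \<gamma> PE E (rtransE G x))"

lemma translation_vertex: "p \<in> PV \<Longrightarrow> fst (translation x) (\<phi> p) = \<phi> (rtransV G x p)"
  by (simp add: translation_def transport_apply[OF bij_vertex])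

lemma translation_edge: "e \<in> PE \<Longrightarrow> snd (translation x) (\<gamma> e) = \<gamma> (rtransE G x e)"
  by (simp add: translation_def transport_apply[OF bij_edge])

lemma translation_aut:
  assumes "x \<in> carrier G"
  shows "translation x \<in> aut V E \<psi>"
proof -
  have "\<psi> (snd (translation x) e) = fst (translation x) ` \<psi> e" if e: "e \<in> E" for e
  proof -
    obtain e0 where e0: "e0 \<in> PE" "e = \<gamma> e0"
      using e bij_edge unfolding bij_betw_def by blast
    have "\<psi> (snd (translation x) e) = \<phi> ` fst (rtransE G x e0)"
      using e0 ends rtransE_PhiE[OF e0(1) assms] by (simp add: translation_edge)
    also have "\<dots> = transport \<phi> PV V (rtransV G x) ` \<phi> ` fst e0"
      using transport_image[OF bij_vertex PhiE_ends[OF e0(1)]] by (simp add: rtransE_def)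
    also have "\<dots> = fst (translation x) ` \<psi> e"
      using e0 ends by (simp add: translation_def)
    finally show ?thesis .
  qed
  then show ?thesis
    using bij_betw_transport[OF bij_vertex bij_betw_rtransV[OF assms]]
      bij_betw_transport[OF bij_edge bij_betw_rtransE[OF assms]]
    by (simp add: aut_def translation_def transport_outside)
qed

lemma translation_mult:
  assumes "x \<in> carrier G" "y \<in> carrier G"
  shows "translation (x \<otimes> y) = translation x \<otimes>\<^bsub>A\<^esub> translation y"
proof -
  have V: "transport \<phi> PV V (rtransV G (x \<otimes> y)) v =
      transport \<phi> PV V (rtransV G x) (transport \<phi> PV V (rtransV G y) v)" for v
    using rtransV_PhiV[OF _ assms(2)] rtransV_mult[OF _ assms]
    by (intro transport_compose[OF bij_vertex]) simp_all
  have E: "transport \<gamma> PE E (rtransE G (x \<otimes> y)) e =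
      transport \<gamma> PE E (rtransE G x) (transport \<gamma> PE E (rtransE G y) e)" for e
    using rtransE_PhiE[OF _ assms(2)] rtransE_mult[OF _ assms]
    by (intro transport_compose[OF bij_edge]) simp_all
  show ?thesis
    using V E by (simp add: translation_def AutGroup_def fun_eq_iff)
qed

sublocale translation: group_hom G A translation
  by (intro group_hom.intro group_hom_axioms.intro is_group group_AutGroup)
    (simp add: hom_def translation_aut translation_mult carrier_AutGroup)

definition translation_subgroup where
  "translation_subgroup = translation ` carrier G"

definition base where
  "base i = \<phi> (i, K i)"

definition copy where
  "copy i = \<phi> ` {q \<in> PV. fst q = i}"

lemma phi_injD: "p \<in> PV \<Longrightarrow> q \<in> PV \<Longrightarrow> \<phi> p = \<phi> q \<Longrightarrow> p = q"
  using bij_vertex by (auto simp: bij_betw_def inj_on_def)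

lemma PhiE_preimage:
  assumes "e \<in> E" "\<psi> e = \<phi> ` X" "X \<subseteq> PV"
  obtains e0 where "e0 \<in> PE" "e = \<gamma> e0" "fst e0 = X"
proof -
  obtain e0 where e0: "e0 \<in> PE" "e = \<gamma> e0" using assms(1) bij_edge unfolding bij_betw_def by blast
  then have "\<phi> ` fst e0 = \<phi> ` X" using ends assms(2) by simp
  then have "fst e0 = X"
    using inj_on_image_eq_iff[OF bij_betw_imp_inj_on[OF bij_vertex] PhiE_ends[OF e0(1)] assms(3)] by blast
  with e0 show thesis by (intro that)
qed

lemma base_vertex: "i \<in> I \<Longrightarrow> base i \<in> V"
  using bij_vertex base_vertex_PhiV by (simp add: base_def bij_betw_apply)

lemma base_in_copy_iff:
  assumes "i \<in> I"
  shows "base i \<in> copy j \<longleftrightarrow> i = j"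
  using phi_injD base_vertex_PhiV[OF assms] by (force simp: base_def copy_def)

lemma vorbit_translation_subgroup:
  assumes "p \<in> PV"
  shows "vorbit translation_subgroup (\<phi> p) = copy (fst p)"
proof
  show "vorbit translation_subgroup (\<phi> p) \<subseteq> copy (fst p)"
    using rtransV_PhiV[OF assms] translation_vertex[OF assms]
    by (auto simp: vorbit_def translation_subgroup_def copy_def rtransV_def)
  show "copy (fst p) \<subseteq> vorbit translation_subgroup (\<phi> p)"
  proof
    fix w assume "w \<in> copy (fst p)"
    then obtain q where q: "q \<in> PV" "fst q = fst p" "w = \<phi> q" unfolding copy_def by blast
    obtain i y where p: "p = (i, K i #> y)" "i \<in> I" "y \<in> carrier G" using assms PhiV_iff by blast
    obtain z where z: "q = (i, K i #> z)" "z \<in> carrier G" using q(1,2) p(1) PhiV_iff by auto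
    have "w = fst (translation (inv z \<otimes> y)) (\<phi> p)"
      using translation_vertex[OF assms] rtransV_moves_copy[OF p(2,3) z(2)] p(1) q(3) z(1) by simp
    then show "w \<in> vorbit translation_subgroup (\<phi> p)"
      using p(3) z(2) unfolding vorbit_def translation_subgroup_def by blast
  qed
qed

lemma vorbit_base: "i \<in> I \<Longrightarrow> vorbit translation_subgroup (base i) = copy i"
  using vorbit_translation_subgroup[OF base_vertex_PhiV] by (simp add: base_def)

lemma vorbits_translation_subgroup: "vorbits translation_subgroup V = copy ` I"
proof
  show "vorbits translation_subgroup V \<subseteq> copy ` I"
  proof
    fix Orb assume "Orb \<in> vorbits translation_subgroup V"
    then obtain p where "p \<in> PV" "Orb = vorbit translation_subgroup (\<phi> p)"
      using bij_vertex unfolding vorbits_def bij_betw_def by blast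
    then show "Orb \<in> copy ` I" using vorbit_translation_subgroup PhiV_iff by auto
  qed
  show "copy ` I \<subseteq> vorbits translation_subgroup V"
    using vorbit_base base_vertex unfolding vorbits_def by (metis image_eqI image_subsetI)
qed

lemma copy_stable:
  assumes "i \<in> I"
  shows "stable_set V E \<psi> (copy i)"
  unfolding stable_set_def
proof (intro conjI ballI impI notI)
  show "copy i \<subseteq> V" using bij_vertex by (auto simp: copy_def bij_betw_apply)
  fix u v assume "u \<in> copy i" "v \<in> copy i" "u \<noteq> v" "adjacent E \<psi> u v"
  then obtain p q e where p: "p \<in> PV" "fst p = i" "u = \<phi> p" and q: "q \<in> PV" "fst q = i" "v = \<phi> q"
    and e: "e \<in> E" "\<psi> e = {u, v}"
    unfolding copy_def adjacent_def by blast
  have "\<psi> e = \<phi> ` {p, q}" "{p, q} \<subseteq> PV" using e(2) p q by simp_all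
  then obtain e0 where e0: "e0 \<in> PE" "e = \<gamma> e0" "fst e0 = {p, q}" by (rule PhiE_preimage[OF e(1)])
  from PhiE_ends_distinct[OF e0(1,3)] show False using p(2) q(2) by simp
qed

lemma clique_bases: "clique V E \<psi> (base ` I)"
  unfolding clique_def
proof (intro conjI ballI impI)
  show "base ` I \<subseteq> V" using base_vertex by blast
  fix u v assume "u \<in> base ` I" "v \<in> base ` I" "u \<noteq> v"
  then obtain i j where ij: "i \<in> I" "j \<in> I" "i \<noteq> j" "u = base i" "v = base j" by blast
  have "base_edge i j \<one> \<in> PE"
    using base_edge_PhiE[OF ij(1-3)] subgroup.one_closed[OF subgroup_K[OF ij(1)]] by blast
  moreover have "\<psi> (\<gamma> (base_edge i j \<one>)) = {u, v}"
    using ends calculation ij K_carrier by (simp add: base_def coset_mult_one)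
  ultimately show "adjacent E \<psi> u v"
    unfolding adjacent_def using bij_betw_apply[OF bij_edge] by blast
qed

lemma vstab_base:
  assumes "i \<in> I"
  shows "vstab translation_subgroup (base i) = translation ` K i"
proof -
  have "fst (translation x) (base i) = base i \<longleftrightarrow> x \<in> K i" if "x \<in> carrier G" for x
    using translation_vertex[OF base_vertex_PhiV[OF assms]] rtransV_base_vertex_iff[OF assms that]
      phi_injD[OF rtransV_PhiV[OF base_vertex_PhiV[OF assms] that] base_vertex_PhiV[OF assms]]
    by (auto simp: base_def)
  then show ?thesis
    using K_carrier[OF assms] by (auto simp: vstab_def translation_subgroup_def)
qed

lemma vstab_base_cyclic:
  assumes "i \<in> I"
  shows "cyclic_group (subgroup_generated A (vstab translation_subgroup (base i)))"
proof -
  have "translation ` K i = generate A {translation (s i)}"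
    using translation.generate_img[of "{s i}"] gens assms by auto
  moreover have "translation (s i) \<in> translation ` K i"
    using generate.incl[of "s i" "{s i}" G] by blast
  ultimately show ?thesis
    unfolding vstab_base[OF assms]
    using cyclic_subgroup_generated_iff[OF group_AutGroup translation.subgroup_img_is_subgroup[OF subgroup_K[OF assms]]]
    by blast
qed

lemma edges_to_base:
  assumes "i \<in> I" "j \<in> I" "i \<noteq> j"
  shows "edges_to E \<psi> (base i) (copy j) = (\<lambda>g. \<gamma> (base_edge i j g)) ` K i"
proof (intro equalityI subsetI)
  fix e assume "e \<in> edges_to E \<psi> (base i) (copy j)"
  then obtain q where e: "e \<in> E" "q \<in> PV" "fst q = j" "\<psi> e = {base i, \<phi> q}"
    unfolding edges_to_def copy_def by blast
  have "\<psi> e = \<phi> ` {(i, K i), q}" "{(i, K i), q} \<subseteq> PV"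
    using e(2,4) base_vertex_PhiV[OF assms(1)] by (simp_all add: base_def)
  then obtain e0 where e0: "e0 \<in> PE" "e = \<gamma> e0" "fst e0 = {(i, K i), q}"
    by (rule PhiE_preimage[OF e(1)])
  then show "e \<in> (\<lambda>g. \<gamma> (base_edge i j g)) ` K i"
    using PhiE_at_base_vertex[OF e0(1,3) e(3) assms(2)] e0(2) by blast
next
  fix e assume "e \<in> (\<lambda>g. \<gamma> (base_edge i j g)) ` K i"
  then obtain g where g: "g \<in> K i" "e = \<gamma> (base_edge i j g)" by blast
  have g_carrier: "g \<in> carrier G" using g(1) K_carrier[OF assms(1)] by blast
  have "base_edge i j g \<in> PE" by (rule base_edge_PhiE[OF assms g(1)])
  then have "e \<in> E" "\<psi> e = {base i, \<phi> (j, K j #> g)}"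
    using g(2) ends bij_betw_apply[OF bij_edge] by (auto simp: base_def)
  moreover have "\<phi> (j, K j #> g) \<in> copy j"
    using PhiV_memI[OF assms(2) g_carrier] by (force simp: copy_def)
  ultimately show "e \<in> edges_to E \<psi> (base i) (copy j)" unfolding edges_to_def by blast
qed

lemma translation_base_edge_iff:
  assumes "i \<in> I" "j \<in> I" "i \<noteq> j" "g \<in> K i" "g' \<in> K i" "x \<in> K i"
  shows "snd (translation x) (\<gamma> (base_edge i j g)) = \<gamma> (base_edge i j g') \<longleftrightarrow> x = inv g' \<otimes> g"
proof -
  have carrier: "g \<in> carrier G" "g' \<in> carrier G" "x \<in> carrier G"
    using assms(4-6) K_carrier[OF assms(1)] by blast+
  have closed: "g \<otimes> inv x \<in> K i"
    using subgroup.m_closed[OF subgroup_K[OF assms(1)] assms(4)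
        subgroup.m_inv_closed[OF subgroup_K[OF assms(1)] assms(6)]] .
  have "snd (translation x) (\<gamma> (base_edge i j g)) = \<gamma> (base_edge i j (g \<otimes> inv x))"
    using translation_edge[OF base_edge_PhiE[OF assms(1-4)]] rtransE_base_edge[OF assms(1,2,4,6)] by simp
  also have "\<dots> = \<gamma> (base_edge i j g') \<longleftrightarrow> g \<otimes> inv x = g'"
    by (auto simp: inj_on_eq_iff[OF bij_betw_imp_inj_on[OF bij_edge]
          base_edge_PhiE[OF assms(1-3) closed] base_edge_PhiE[OF assms(1-3,5)]])
  also have "\<dots> \<longleftrightarrow> x = inv g' \<otimes> g"
    using inv_solve_right'[OF carrier(2,1,3)] inv_solve_left[OF carrier(3,2,1)] by simp
  finally show ?thesis .
qed

lemma regular_base: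
  assumes "i \<in> I" "j \<in> I" "i \<noteq> j"
  shows "regular_action (vstab translation_subgroup (base i)) (\<lambda>h e. snd h e) (edges_to E \<psi> (base i) (copy j))"
  unfolding regular_action_def vstab_base[OF assms(1)] edges_to_base[OF assms]
proof (intro ballI)
  fix e e' assume "e \<in> (\<lambda>g. \<gamma> (base_edge i j g)) ` K i" "e' \<in> (\<lambda>g. \<gamma> (base_edge i j g)) ` K i"
  then obtain g g' where g: "g \<in> K i" "e = \<gamma> (base_edge i j g)" and g': "g' \<in> K i" "e' = \<gamma> (base_edge i j g')"
    by blast
  have x: "inv g' \<otimes> g \<in> K i"
    using subgroup.m_closed[OF subgroup_K[OF assms(1)] subgroup.m_inv_closed[OF subgroup_K[OF assms(1)] g'(1)] g(1)] .
  show "\<exists>!k. k \<in> translation ` K i \<and> snd k e = e'"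
  proof (rule ex1I[of _ "translation (inv g' \<otimes> g)"])
    show "translation (inv g' \<otimes> g) \<in> translation ` K i \<and> snd (translation (inv g' \<otimes> g)) e = e'"
      using translation_base_edge_iff[OF assms g(1) g'(1) x] g(2) g'(2) x by simp
  next
    fix k assume "k \<in> translation ` K i \<and> snd k e = e'"
    then obtain y where "y \<in> K i" "k = translation y" "snd (translation y) e = e'" by blast
    then show "k = translation (inv g' \<otimes> g)"
      using translation_base_edge_iff[OF assms g(1) g'(1)] g(2) g'(2) by simp
  qed
qed

theorem char_conditions_translation_subgroup:
  "char_conditions V E \<psi> translation_subgroup (base ` I)"
  unfolding char_conditions_def vorbits_translation_subgroup
proof (intro conjI ballI impI)
  show "subgroup translation_subgroup A"
    unfolding translation_subgroup_def by (rule translation.img_is_subgroup)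
  show "clique V E \<psi> (base ` I)" by (rule clique_bases)
  fix Orb assume "Orb \<in> copy ` I"
  then obtain j where j: "j \<in> I" "Orb = copy j" by blast
  show "stable_set V E \<psi> Orb" using copy_stable j by simp
  show "base ` I \<inter> Orb \<noteq> {}" using base_in_copy_iff[OF j(1), of j] j by blast
next
  fix u assume "u \<in> base ` I"
  then show "cyclic_group (subgroup_generated A (vstab translation_subgroup u))"
    using vstab_base_cyclic by blast
next
  fix u Orb assume "u \<in> base ` I" "Orb \<in> copy ` I" "u \<notin> Orb"
  then obtain i j where "i \<in> I" "j \<in> I" "u = base i" "Orb = copy j" by blast
  moreover from this have "i \<noteq> j" using base_in_copy_iff \<open>u \<notin> Orb\<close> by simp
  ultimately show "regular_action (vstab translation_subgroup u) (\<lambda>h e. snd h e) (edges_to E \<psi> u Orb)"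
    using regular_base by blast
qed

end

section \<open>Graphs satisfying the conditions are \<open>G\<close>-graphs\<close>

locale char_graph =
  fixes V :: "'v set" and E :: "'e set" and \<psi> :: "'e \<Rightarrow> 'v set"
    and H :: "(('v \<Rightarrow> 'v) \<times> ('e \<Rightarrow> 'e)) set" and C :: "'v set"
  assumes loopless: "loopless_multigraph V E \<psi>"
    and conditions: "char_conditions V E \<psi> H C"

sublocale char_graph \<subseteq> aut_subgroup
  using conditions by (simp add: aut_subgroup_def char_conditions_def)

context char_graph
begin

lemma clique_C: "clique V E \<psi> C"
  using conditions by (simp add: char_conditions_def)

lemma vorbit_stable: "v \<in> V \<Longrightarrow> stable_set V E \<psi> (vorbit H v)"
  using conditions vorbit_in_vorbits by (simp add: char_conditions_def)

lemma vorbit_meets_clique: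
  assumes "v \<in> V"
  obtains c where "c \<in> C" "c \<in> vorbit H v"
proof -
  have "C \<inter> vorbit H v \<noteq> {}"
    using conditions vorbit_in_vorbits[OF assms] by (simp add: char_conditions_def)
  then show thesis using that by blast
qed

lemma vstab_cyclic: "c \<in> C \<Longrightarrow> cyclic_group (subgroup_generated A (vstab H c))"
  using conditions by (simp add: char_conditions_def)

lemma vstab_regular:
  "c \<in> C \<Longrightarrow> v \<in> V \<Longrightarrow> c \<notin> vorbit H v \<Longrightarrow>
     regular_action (vstab H c) (\<lambda>h e. snd h e) (edges_to E \<psi> c (vorbit H v))"
  using conditions vorbit_in_vorbits by (simp add: char_conditions_def)

lemma clique_subset: "C \<subseteq> V"
  using clique_C by (simp add: clique_def)

lemma adjacent_not_in_vorbit: "a \<in> V \<Longrightarrow> adjacent E \<psi> a b \<Longrightarrow> a \<noteq> b \<Longrightarrow> b \<notin> vorbit H a"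
  using vorbit_stable[of a] vorbit_self[of a] by (auto simp: stable_set_def)

lemma clique_vorbit_unique:
  assumes "c \<in> C" "c' \<in> C" "c' \<in> vorbit H c"
  shows "c' = c"
proof (rule ccontr)
  assume "c' \<noteq> c"
  then have "adjacent E \<psi> c c'" using clique_C assms by (simp add: clique_def)
  then show False
    using adjacent_not_in_vorbit \<open>c' \<noteq> c\<close> clique_subset assms by blast
qed

definition stab_gen :: "'v \<Rightarrow> ('v \<Rightarrow> 'v) \<times> ('e \<Rightarrow> 'e)" where
  "stab_gen c = (SOME x. x \<in> vstab H c \<and> vstab H c = generate A {x})"

lemma stab_gen:
  assumes "c \<in> C"
  shows "stab_gen c \<in> vstab H c" "vstab H c = generate A {stab_gen c}"
proof -
  have "\<exists>x. x \<in> vstab H c \<and> vstab H c = generate A {x}"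
    using cyclic_subgroup_generated_iff[OF A.is_group subgroup_vstab] vstab_cyclic[OF assms] by blast
  then have "stab_gen c \<in> vstab H c \<and> vstab H c = generate A {stab_gen c}"
    unfolding stab_gen_def by (rule someI_ex)
  then show "stab_gen c \<in> vstab H c" "vstab H c = generate A {stab_gen c}" by auto
qed

abbreviation "HG \<equiv> A\<lparr>carrier := H\<rparr>"

lemma PhiV_HG: "PhiV HG C stab_gen = {(c, vstab H c #>\<^bsub>A\<^esub> x) | c x. c \<in> C \<and> x \<in> H}"
proof -
  have gen: "generate HG {stab_gen c} = vstab H c" if "c \<in> C" for c
  proof -
    have "{stab_gen c} \<subseteq> H" using stab_gen(1)[OF that] vstab_subset by blast
    then show ?thesis using A.generate_consistent[OF _ subgroup_H] stab_gen(2)[OF that] by simp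
  qed
  show ?thesis
    unfolding PhiV_def r_coset_consistent
  proof (intro Collect_cong iffI; elim exE conjE)
    fix p c x
    assume "p = (c, generate HG {stab_gen c} #>\<^bsub>A\<^esub> x)" "c \<in> C" "x \<in> carrier HG"
    then show "\<exists>c x. p = (c, vstab H c #>\<^bsub>A\<^esub> x) \<and> c \<in> C \<and> x \<in> H"
      by (intro exI[of _ c] exI[of _ x]) (simp add: gen)
  next
    fix p c x
    assume "p = (c, vstab H c #>\<^bsub>A\<^esub> x)" "c \<in> C" "x \<in> H"
    then show "\<exists>c x. p = (c, generate HG {stab_gen c} #>\<^bsub>A\<^esub> x) \<and> c \<in> C \<and> x \<in> carrier HG"
      by (intro exI[of _ c] exI[of _ x]) (simp add: gen)
  qed
qed

lemma PhiV_HG_memI: "c \<in> C \<Longrightarrow> x \<in> H \<Longrightarrow> (c, vstab H c #>\<^bsub>A\<^esub> x) \<in> PhiV HG C stab_gen"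
  unfolding PhiV_HG by blast

abbreviation Phi_edge :: "'v \<Rightarrow> 'v \<Rightarrow> ('v \<Rightarrow> 'v) \<times> ('e \<Rightarrow> 'e) \<Rightarrow> _" where
  "Phi_edge i j g \<equiv> ({(i, vstab H i #>\<^bsub>A\<^esub> g), (j, vstab H j #>\<^bsub>A\<^esub> g)}, g)"

lemma PhiE_HG: "PhiE HG C stab_gen = {Phi_edge i j g | i j g. i \<in> C \<and> j \<in> C \<and> i \<noteq> j \<and> g \<in> H}"
proof -
  have rcos: "g \<in> H" "vstab H c #>\<^bsub>A\<^esub> x = vstab H c #>\<^bsub>A\<^esub> g"
    if "x \<in> H" "g \<in> vstab H c #>\<^bsub>A\<^esub> x" for c x g
    using that H_mult_closed vstab_subset A.repr_independence[OF that(2) H_carrier[OF that(1)] subgroup_vstab]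
    unfolding r_coset_def by blast+
  have self: "g \<in> vstab H c #>\<^bsub>A\<^esub> g" if "g \<in> H" for c g
    using A.rcos_self[OF H_carrier[OF that] subgroup_vstab] .
  show ?thesis
    unfolding PhiE_def
  proof (intro Collect_cong iffI; elim exE conjE)
    fix p i j S T g
    assume p: "p = ({(i, S), (j, T)}, g)" and ij: "i \<in> C" "j \<in> C" "i \<noteq> j"
      and S: "(i, S) \<in> PhiV HG C stab_gen" and T: "(j, T) \<in> PhiV HG C stab_gen"
      and g: "g \<in> S \<inter> T"
    obtain x y where "x \<in> H" "S = vstab H i #>\<^bsub>A\<^esub> x" "y \<in> H" "T = vstab H j #>\<^bsub>A\<^esub> y"
      using S T unfolding PhiV_HG by blast
    with g rcos have "g \<in> H" "S = vstab H i #>\<^bsub>A\<^esub> g" "T = vstab H j #>\<^bsub>A\<^esub> g"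
      by blast+
    with p ij show "\<exists>i j g. p = Phi_edge i j g \<and> i \<in> C \<and> j \<in> C \<and> i \<noteq> j \<and> g \<in> H"
      by blast
  next
    fix p i j g
    assume "p = Phi_edge i j g" "i \<in> C" "j \<in> C" "i \<noteq> j" "g \<in> H"
    then show "\<exists>i j S T g'. p = ({(i, S), (j, T)}, g') \<and> i \<in> C \<and> j \<in> C \<and> i \<noteq> j \<and>
        (i, S) \<in> PhiV HG C stab_gen \<and> (j, T) \<in> PhiV HG C stab_gen \<and> g' \<in> S \<inter> T"
      unfolding PhiV_HG using self by blast
  qed
qed

text \<open>The vertex \<open>(c, Stab(c) x)\<close> of \<open>\<Phi>(H, S)\<close> is sent to \<open>x\<inverse> c\<close>, which by \<open>vstab_rcos_eq_iff\<close> does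
  not depend on the representative \<open>x\<close>.\<close>

definition iso_vertex :: "'v \<times> (('v \<Rightarrow> 'v) \<times> ('e \<Rightarrow> 'e)) set \<Rightarrow> 'v" where
  "iso_vertex p = fst (inv\<^bsub>A\<^esub> (SOME x. x \<in> H \<and> snd p = vstab H (fst p) #>\<^bsub>A\<^esub> x)) (fst p)"

lemma iso_vertex_eq:
  assumes "x \<in> H"
  shows "iso_vertex (c, vstab H c #>\<^bsub>A\<^esub> x) = fst (inv\<^bsub>A\<^esub> x) c"
proof -
  define y where "y = (SOME y. y \<in> H \<and> vstab H c #>\<^bsub>A\<^esub> x = vstab H c #>\<^bsub>A\<^esub> y)"
  have y: "y \<in> H \<and> vstab H c #>\<^bsub>A\<^esub> x = vstab H c #>\<^bsub>A\<^esub> y"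
    unfolding y_def by (rule someI_ex) (use assms in blast)
  have "iso_vertex (c, vstab H c #>\<^bsub>A\<^esub> x) = fst (inv\<^bsub>A\<^esub> y) c"
    unfolding iso_vertex_def y_def by simp
  also have "\<dots> = fst (inv\<^bsub>A\<^esub> x) c"
    using y vstab_rcos_eq_iff[OF assms conjunct1[OF y], of c] by simp
  finally show ?thesis .
qed

lemma bij_iso_vertex: "bij_betw iso_vertex (PhiV HG C stab_gen) V"
proof (rule bij_betw_imageI)
  show "inj_on iso_vertex (PhiV HG C stab_gen)"
  proof (rule inj_onI)
    fix p q assume "p \<in> PhiV HG C stab_gen" "q \<in> PhiV HG C stab_gen" and eq: "iso_vertex p = iso_vertex q"
    then obtain c x c' y where p: "p = (c, vstab H c #>\<^bsub>A\<^esub> x)" "c \<in> C" "x \<in> H"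
      and q: "q = (c', vstab H c' #>\<^bsub>A\<^esub> y)" "c' \<in> C" "y \<in> H"
      unfolding PhiV_HG by blast
    have same: "fst (inv\<^bsub>A\<^esub> x) c = fst (inv\<^bsub>A\<^esub> y) c'" using eq p q iso_vertex_eq by simp
    then have "c' = fst (y \<otimes>\<^bsub>A\<^esub> inv\<^bsub>A\<^esub> x) c" using inv_cancel(2)[OF q(3)] by simp
    then have "c' \<in> vorbit H c"
      using vorbit_memI[OF H_mult_closed[OF q(3) H_inv_closed[OF p(3)]], of c] by simp
    then have "c' = c" using clique_vorbit_unique p q by blast
    then show "p = q" using vstab_rcos_eq_iff[OF p(3) q(3)] same p q by simp
  qed
  show "iso_vertex ` PhiV HG C stab_gen = V"
  proof
    show "iso_vertex ` PhiV HG C stab_gen \<subseteq> V"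
      unfolding PhiV_HG using iso_vertex_eq act_vertex[OF H_inv_closed] clique_subset by auto
    show "V \<subseteq> iso_vertex ` PhiV HG C stab_gen"
    proof
      fix v assume "v \<in> V"
      then obtain c where "c \<in> C" "c \<in> vorbit H v" by (rule vorbit_meets_clique)
      then obtain h where h: "h \<in> H" "c = fst h v" unfolding vorbit_def by blast
      have "v = iso_vertex (c, vstab H c #>\<^bsub>A\<^esub> h)"
        using iso_vertex_eq[OF h(1)] inv_cancel(1)[OF h(1)] h(2) by simp
      moreover have "(c, vstab H c #>\<^bsub>A\<^esub> h) \<in> PhiV HG C stab_gen"
        unfolding PhiV_HG using \<open>c \<in> C\<close> h(1) by blast
      ultimately show "v \<in> iso_vertex ` PhiV HG C stab_gen" by blast
    qed
  qed
qed

definition clique_edge :: "'v set \<Rightarrow> 'e" where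
  "clique_edge Q = (SOME e. e \<in> E \<and> \<psi> e = Q)"

lemma clique_edge:
  assumes "i \<in> C" "j \<in> C" "i \<noteq> j"
  shows "clique_edge {i, j} \<in> E" "\<psi> (clique_edge {i, j}) = {i, j}"
proof -
  have "\<exists>e. e \<in> E \<and> \<psi> e = {i, j}"
    using clique_C assms unfolding clique_def adjacent_def by blast
  then have "clique_edge {i, j} \<in> E \<and> \<psi> (clique_edge {i, j}) = {i, j}"
    unfolding clique_edge_def by (rule someI_ex)
  then show "clique_edge {i, j} \<in> E" "\<psi> (clique_edge {i, j}) = {i, j}" by auto
qed

lemma regular_clique_edges:
  assumes "i \<in> C" "j \<in> C" "i \<noteq> j"
  shows "regular_action (vstab H i) (\<lambda>h e. snd h e) (edges_to E \<psi> i (vorbit H j))"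
    and "clique_edge {i, j} \<in> edges_to E \<psi> i (vorbit H j)"
proof -
  have "i \<notin> vorbit H j" using clique_vorbit_unique assms by blast
  then show "regular_action (vstab H i) (\<lambda>h e. snd h e) (edges_to E \<psi> i (vorbit H j))"
    using vstab_regular assms clique_subset by blast
  show "clique_edge {i, j} \<in> edges_to E \<psi> i (vorbit H j)"
    using clique_edge[OF assms] vorbit_self[of j] by (auto simp: edges_to_def)
qed

lemma vstab_fixing_clique_edge:
  assumes "i \<in> C" "j \<in> C" "i \<noteq> j" "k \<in> vstab H i" "snd k (clique_edge {i, j}) = clique_edge {i, j}"
  shows "k = \<one>\<^bsub>A\<^esub>"
proof -
  let ?e = "clique_edge {i, j}"
  have "\<exists>!k. k \<in> vstab H i \<and> snd k ?e = ?e"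
    using regular_clique_edges[OF assms(1-3)] unfolding regular_action_def by blast
  moreover have "\<one>\<^bsub>A\<^esub> \<in> vstab H i \<and> snd \<one>\<^bsub>A\<^esub> ?e = ?e" using one_vstab by simp
  ultimately show ?thesis using assms(4,5) by blast
qed

text \<open>The edge labelled \<open>g\<close> between the copies of \<open>c\<close> and \<open>c'\<close> is sent to \<open>g\<inverse>\<close> applied to one
  fixed edge between \<open>c\<close> and \<open>c'\<close>; regularity of the stabiliser makes this bijective.\<close>

definition iso_edge :: "('v \<times> (('v \<Rightarrow> 'v) \<times> ('e \<Rightarrow> 'e)) set) set \<times> (('v \<Rightarrow> 'v) \<times> ('e \<Rightarrow> 'e)) \<Rightarrow> 'e"
  where "iso_edge p = snd (inv\<^bsub>A\<^esub> (snd p)) (clique_edge (fst ` fst p))"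

lemma iso_edge_eq: "iso_edge (Phi_edge i j g) = snd (inv\<^bsub>A\<^esub> g) (clique_edge {i, j})"
  by (simp add: iso_edge_def)

lemma iso_edge_ends:
  assumes "i \<in> C" "j \<in> C" "i \<noteq> j" "g \<in> H"
  shows "\<psi> (iso_edge (Phi_edge i j g)) = iso_vertex ` fst (Phi_edge i j g)"
proof -
  have "\<psi> (iso_edge (Phi_edge i j g)) = fst (inv\<^bsub>A\<^esub> g) ` \<psi> (clique_edge {i, j})"
    unfolding iso_edge_eq using act_ends[OF H_inv_closed[OF assms(4)] clique_edge(1)[OF assms(1-3)]] .
  also have "\<dots> = iso_vertex ` fst (Phi_edge i j g)"
    unfolding clique_edge(2)[OF assms(1-3)] by (simp only: image_insert image_empty fst_conv iso_vertex_eq[OF assms(4)])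
  finally show ?thesis .
qed

lemma inj_on_iso_edge: "inj_on iso_edge (PhiE HG C stab_gen)"
proof (rule inj_onI)
  fix e e' assume "e \<in> PhiE HG C stab_gen" "e' \<in> PhiE HG C stab_gen" and eq: "iso_edge e = iso_edge e'"
  then obtain i j g i' j' g' where e: "e = Phi_edge i j g" "i \<in> C" "j \<in> C" "i \<noteq> j" "g \<in> H"
    and e': "e' = Phi_edge i' j' g'" "i' \<in> C" "j' \<in> C" "i' \<noteq> j'" "g' \<in> H"
    unfolding PhiE_HG by blast
  have "iso_vertex ` fst e = iso_vertex ` fst e'"
    using eq iso_edge_ends e e' by metis
  moreover have "fst e \<subseteq> PhiV HG C stab_gen" "fst e' \<subseteq> PhiV HG C stab_gen"
    using e e' PhiV_HG_memI by simp_all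
  ultimately have ends: "fst e = fst e'"
    using inj_on_image_eq_iff[OF bij_betw_imp_inj_on[OF bij_iso_vertex]] by blast
  then have "fst ` fst e = fst ` fst e'" by simp
  then have ij: "{i, j} = {i', j'}" using e e' by simp
  have "(i, vstab H i #>\<^bsub>A\<^esub> g) \<in> fst e'" using ends e by auto
  then have "vstab H i #>\<^bsub>A\<^esub> g = vstab H i #>\<^bsub>A\<^esub> g'" using e' by auto
  then have "fst (g' \<otimes>\<^bsub>A\<^esub> inv\<^bsub>A\<^esub> g) i = i"
    using vstab_rcos_eq_iff[OF e(5) e'(5)] inv_cancel(2)[OF e'(5)] by simp
  then have stab: "g' \<otimes>\<^bsub>A\<^esub> inv\<^bsub>A\<^esub> g \<in> vstab H i"
    unfolding vstab_def using H_mult_closed[OF e'(5) H_inv_closed[OF e(5)]] by blast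
  have "snd (inv\<^bsub>A\<^esub> g) (clique_edge {i, j}) = iso_edge e"
    using e(1) by (simp add: iso_edge_eq)
  also have "\<dots> = snd (inv\<^bsub>A\<^esub> g') (clique_edge {i, j})"
    using eq e'(1) ij by (simp add: iso_edge_eq)
  finally have "snd (g' \<otimes>\<^bsub>A\<^esub> inv\<^bsub>A\<^esub> g) (clique_edge {i, j}) = clique_edge {i, j}"
    using inv_cancel(4)[OF e'(5)] by simp
  then have "g' \<otimes>\<^bsub>A\<^esub> inv\<^bsub>A\<^esub> g = \<one>\<^bsub>A\<^esub>"
    using vstab_fixing_clique_edge[OF e(2-4) stab] by blast
  then have "g' = g"
    using A.inv_solve_right[OF A.one_closed H_carrier[OF e'(5)] H_carrier[OF e(5)]] H_carrier[OF e(5)]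
    by simp
  then show "e = e'" using ends e e' by simp
qed

lemma iso_edge_onto: "iso_edge ` PhiE HG C stab_gen = E"
proof
  show "iso_edge ` PhiE HG C stab_gen \<subseteq> E"
    unfolding PhiE_HG using iso_edge_eq act_edge[OF H_inv_closed clique_edge(1)] by auto
  show "E \<subseteq> iso_edge ` PhiE HG C stab_gen"
  proof
    fix e assume "e \<in> E"
    then obtain a b where ab: "a \<in> V" "b \<in> V" "a \<noteq> b" "\<psi> e = {a, b}"
      using loopless unfolding loopless_multigraph_def by blast
    obtain i where i: "i \<in> C" "i \<in> vorbit H a" using vorbit_meets_clique[OF ab(1)] by blast
    obtain j where j: "j \<in> C" "j \<in> vorbit H b" using vorbit_meets_clique[OF ab(2)] by blast
    have "b \<notin> vorbit H a"
      using adjacent_not_in_vorbit[OF ab(1) _ ab(3)] \<open>e \<in> E\<close> ab(4) by (auto simp: adjacent_def)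
    have "i \<noteq> j"
    proof
      assume "i = j"
      then have "vorbit H a = vorbit H b" using vorbit_eq[OF i(2)] vorbit_eq[OF j(2)] by simp
      then show False using \<open>b \<notin> vorbit H a\<close> vorbit_self[of b] by simp
    qed
    obtain x where x: "x \<in> H" "i = fst x a" using i unfolding vorbit_def by blast
    have "snd x e \<in> E" "\<psi> (snd x e) = {i, fst x b}"
      using act_edge[OF x(1) \<open>e \<in> E\<close>] act_ends[OF x(1) \<open>e \<in> E\<close>] ab x by simp_all
    moreover have "fst x b \<in> vorbit H j" using vorbit_memI[OF x(1)] vorbit_eq[OF j(2)] by blast
    ultimately have "snd x e \<in> edges_to E \<psi> i (vorbit H j)" unfolding edges_to_def by blast
    then obtain k where k: "k \<in> vstab H i" "snd k (clique_edge {i, j}) = snd x e"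
      using regular_clique_edges[OF i(1) j(1) \<open>i \<noteq> j\<close>] unfolding regular_action_def by blast
    define g where "g = inv\<^bsub>A\<^esub> k \<otimes>\<^bsub>A\<^esub> x"
    have kH: "k \<in> H" using k vstab_subset by blast
    have "g \<in> H" unfolding g_def using H_mult_closed H_inv_closed kH x by blast
    have "inv\<^bsub>A\<^esub> g = inv\<^bsub>A\<^esub> x \<otimes>\<^bsub>A\<^esub> k"
      unfolding g_def using A.inv_mult_group[OF A.inv_closed[OF H_carrier[OF kH]] H_carrier[OF x(1)]]
        A.inv_inv[OF H_carrier[OF kH]] by simp
    then have "iso_edge (Phi_edge i j g) = e"
      unfolding iso_edge_eq using k(2) inv_cancel(3)[OF x(1)] by simp
    moreover have "Phi_edge i j g \<in> PhiE HG C stab_gen"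
      unfolding PhiE_HG using i j \<open>i \<noteq> j\<close> \<open>g \<in> H\<close> by blast
    ultimately show "e \<in> iso_edge ` PhiE HG C stab_gen" by blast
  qed
qed

theorem G_graph_via_stabilisers: "G_graph_via HG C stab_gen V E \<psi>"
  unfolding G_graph_via_def mg_iso_def
proof (intro conjI exI)
  show "group HG" by (rule subgroup.subgroup_is_group[OF subgroup_H A.is_group])
  show "stab_gen ` C \<subseteq> carrier HG" using stab_gen(1) vstab_subset by fastforce
  show "bij_betw iso_vertex (PhiV HG C stab_gen) V" by (rule bij_iso_vertex)
  show "bij_betw iso_edge (PhiE HG C stab_gen) E"
    using inj_on_iso_edge iso_edge_onto by (simp add: bij_betw_def)
  show "\<forall>e\<in>PhiE HG C stab_gen. \<psi> (iso_edge e) = iso_vertex ` PhiPsi e"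
    unfolding PhiE_HG PhiPsi_def using iso_edge_ends by auto
qed

end

theorem corollary2:
  fixes V :: "'v set" and E :: "'e set" and \<psi> :: "'e \<Rightarrow> 'v set"
  assumes "loopless_multigraph V E \<psi>"
  shows "(\<forall>(G :: ('g, 'b) monoid_scheme) (I :: 'i set) s.
            G_graph_via G I s V E \<psi> \<longrightarrow> (\<exists>H C. char_conditions V E \<psi> H C))
       \<and> ((\<exists>H C. char_conditions V E \<psi> H C) \<longrightarrow>
            (\<exists>(G :: (('v \<Rightarrow> 'v) \<times> ('e \<Rightarrow> 'e)) monoid) (I :: 'v set) s. G_graph_via G I s V E \<psi>))"
proof (intro conjI allI impI)
  fix G :: "('g, 'b) monoid_scheme" and I :: "'i set" and s
  assume "G_graph_via G I s V E \<psi>"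
  then obtain \<phi> \<gamma> where "group G" "s ` I \<subseteq> carrier G" "bij_betw \<phi> (PhiV G I s) V"
    "bij_betw \<gamma> (PhiE G I s) E" "\<forall>e\<in>PhiE G I s. \<psi> (\<gamma> e) = \<phi> ` fst e"
    unfolding G_graph_via_def mg_iso_def PhiPsi_def by blast
  then have "G_graph_iso G I s V E \<psi> \<phi> \<gamma>"
    by (intro G_graph_iso.intro Phi_graph.intro Phi_graph_axioms.intro G_graph_iso_axioms.intro)
  then show "\<exists>H C. char_conditions V E \<psi> H C"
    using G_graph_iso.char_conditions_translation_subgroup by blast
next
  assume "\<exists>H C. char_conditions V E \<psi> H C"
  then obtain H C where "char_graph V E \<psi> H C"
    using assms char_graph.intro by blast
  then show "\<exists>(G :: (('v \<Rightarrow> 'v) \<times> ('e \<Rightarrow> 'e)) monoid) (I :: 'v set) s. G_graph_via G I s V E \<psi>"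
    using char_graph.G_graph_via_stabilisers by blast
qed

end
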